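(* Let $\mathcal H$ be a standard $(1,1)$ diagram of a knot $K$ in a rational homology sphere $Y$, and let $\mathfrak s$ be a spin$^c$ structure of $Y$. Moving along $\tilde\beta_{\mathfrak s}$ in the direction of its orientation, suppose $b$ and $c$ are two turning points, in that order, with no turning point between them. Label the points of $\tilde\alpha\cap\tilde\beta_{\mathfrak s}$ from $b$ to $c$ along $\tilde\beta_{\mathfrak s}$ (including $b$ and $c$), in order, as $x_0=b,x_1,x_2,\dots$. Then, for the Maslov gradings of the corresponding elements of the basis $\mathfrak T(\mathcal H,\mathfrak s)$: $\operatorname{gr}(x_\ell)=\operatorname{gr}(b)$ if $\ell$ is even; $\operatorname{gr}(x_\ell)=\operatorname{gr}(b)+1$ if $\ell$ is odd and $b$ is a positive turning point; $\operatorname{gr}(x_\ell)=\operatorname{gr}(b)-1$ if $\ell$ is odd and $b$ is a negative turning point.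
   Context: $\mathcal H=(T^2,\alpha,\beta,w,z)$ is a doubly pointed genus one Heegaard diagram in standard form (every bigon cobounded by $\alpha$ and $\beta$ contains a basepoint), with $\alpha,\beta$ oriented and $\alpha\cdot\beta>0$. In the universal cover $\mathbb R^2$, with lifts of $\alpha$ the lines $\{y=k\}$ and $\tilde\alpha=\{y=0\}$ (oriented from $\alpha$), choose a point of $\alpha\cap\beta$ in spin$^c$ structure $\mathfrak s$ (via $\mathfrak s_w$), lift it to $\tilde\alpha$, and let $\tilde\beta_{\mathfrak s}$ be the lift of $\beta$ through it. The points of $\tilde\alpha\cap\tilde\beta_{\mathfrak s}$ correspond bijectively to $\mathfrak T(\mathcal H,\mathfrak s)=\{x\in\alpha\cap\beta:\mathfrak s_w(x)=\mathfrak s\}$; there are $2n+1$ of them, numbered $1,\dots,2n+1$ in the order of the orientation of $\tilde\alpha$. Following $\tilde\beta_{\mathfrak s}$ along its orientation gives a sequence of these points; each point (except the first and last) has a predecessor and a successor. A point is a turning point if its number is greater than both, or less than both, the numbers of its predecessor and successor. $\operatorname{CFK}^\infty(Y,K,\mathfrak s)$ is generated over $\mathbb F=\mathbb Z/2$ by $[x,i,j]$, $x\in\mathfrak T(\mathcal H,\mathfrak s)$, $j-i=A(x)$, with differential counting embedded bigons in $\mathbb R^2$ cobounded by lifts of $\alpha,\beta$: $\partial[x,i,j]=\sum[y,i-n_w(D),j-n_z(D)]$. The basis $\mathfrak T(\mathcal H,\mathfrak s)$ is obtained by choosing $[x,0,A(x)]$ for one $x$ and repeatedly adding, for each $y$ connected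 by a bigon to a chosen element, the unique $[y,i,j]$ appearing in the differential of, or having in its differential, that element. The Maslov grading $\operatorname{gr}$ is lowered by $1$ by $\partial$. For points $a,b$ of this basis, "$a\in\partial b$" means $\partial b$ has a nonzero $a$-component. A turning point $b$ with predecessor $a$ is positive if $a\in\partial b$ and negative if $b\in\partial a$. *)

theory Defs
  imports "HOL-Analysis.Analysis"
begin

text \<open>Universal cover of T^2 = R^2 / Z^2, with the lifts of alpha the horizontal
  lines {y = k}, alpha-tilde = {y = 0} oriented in the +x direction.
  A lift of beta is a curve c :: real => real * real (parameter increasing along
  the orientation of beta).\<close>

definition int_vec :: "real \<times> real \<Rightarrow> bool" where
  "int_vec u \<longleftrightarrow> fst u \<in> \<int> \<and> snd u \<in> \<int>"

definition alpha_pts :: "(real \<Rightarrow> real \<times> real) \<Rightarrow> real set" where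
  "alpha_pts c = {t. snd (c t) = 0}"

definition bigon_boundary :: "(real \<Rightarrow> real \<times> real) \<Rightarrow> real \<Rightarrow> real \<Rightarrow> (real \<times> real) set" where
  "bigon_boundary c s t = c ` closed_segment s t \<union> closed_segment (c s) (c t)"

text \<open>is_bigon c s t: there is an embedded bigon in R^2 from x = c s to y = c t
  (i.e. y appears in the differential of x): the two arcs meet only at x and y,
  the bigon (the inside of the Jordan curve) lies to the left of the alpha-arc
  traversed from x to y (so the induced boundary orientation runs along alpha
  from x to y and along beta from y to x), and both corners are convex
  (the beta-arc leaves each corner into the side of alpha where the bigon lies).\<close>
definition is_bigon :: "(real \<Rightarrow> real \<times> real) \<Rightarrow> real \<Rightarrow> real \<Rightarrow> bool" where
  "is_bigon c s t \<longleftrightarrow>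
     s \<in> alpha_pts c \<and> t \<in> alpha_pts c \<and> s \<noteq> t \<and>
     c ` closed_segment s t \<inter> closed_segment (c s) (c t) = {c s, c t} \<and>
     (let \<sigma> = sgn (fst (c t) - fst (c s)) in
       (\<forall>\<^sub>F e in at_right 0. midpoint (c s) (c t) + (0, \<sigma> * e) \<in> inside (bigon_boundary c s t)) \<and>
       (\<forall>\<^sub>F u in at s within open_segment s t. \<sigma> * snd (c u) > 0) \<and>
       (\<forall>\<^sub>F u in at t within open_segment s t. \<sigma> * snd (c u) > 0))"

definition pred_pt :: "(real \<Rightarrow> real \<times> real) \<Rightarrow> real \<Rightarrow> real" where
  "pred_pt c t = Max {s \<in> alpha_pts c. s < t}"

definition succ_pt :: "(real \<Rightarrow> real \<times> real) \<Rightarrow> real \<Rightarrow> real" where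
  "succ_pt c t = Min {s \<in> alpha_pts c. t < s}"

text \<open>Turning point: the numbering along alpha-tilde is the order of the
  x-coordinate.\<close>
definition turning :: "(real \<Rightarrow> real \<times> real) \<Rightarrow> real \<Rightarrow> bool" where
  "turning c t \<longleftrightarrow> t \<in> alpha_pts c \<and> (\<exists>s\<in>alpha_pts c. s < t) \<and> (\<exists>s\<in>alpha_pts c. t < s) \<and>
     (let a = fst (c (pred_pt c t)); b = fst (c t); n = fst (c (succ_pt c t)) in
        (a < b \<and> n < b) \<or> (b < a \<and> b < n))"

text \<open>Positive: predecessor a \<in> \<partial> b; negative: b \<in> \<partial> a.\<close>
definition positive_turning :: "(real \<Rightarrow> real \<times> real) \<Rightarrow> real \<Rightarrow> bool" where
  "positive_turning c t \<longleftrightarrow> turning c t \<and> is_bigon c t (pred_pt c t)"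

definition negative_turning :: "(real \<Rightarrow> real \<times> real) \<Rightarrow> real \<Rightarrow> bool" where
  "negative_turning c t \<longleftrightarrow> turning c t \<and> is_bigon c (pred_pt c t) t"

text \<open>A standard genus one doubly pointed Heegaard diagram (T^2, alpha, beta, w, z)
  with alpha . beta > 0, given through a lift gamma of beta (beta = gamma mod Z^2,
  gamma(t+1) = gamma t + (p,q), so alpha . beta = q) and lifts w, z of the basepoints.
  Standard form: every bigon embedded in T^2 contains a basepoint.\<close>
definition standard_diagram :: "(real \<Rightarrow> real \<times> real) \<Rightarrow> int \<Rightarrow> int \<Rightarrow> real \<times> real \<Rightarrow> real \<times> real \<Rightarrow> bool" where
  "standard_diagram \<gamma> p q w z \<longleftrightarrow>
     \<gamma> C1_differentiable_on UNIV \<and>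
     (\<forall>t. vector_derivative \<gamma> (at t) \<noteq> 0) \<and>
     (\<forall>t. \<gamma> (t + 1) = \<gamma> t + (of_int p, of_int q)) \<and>
     q > 0 \<and>
     (\<forall>s t. int_vec (\<gamma> s - \<gamma> t) \<longrightarrow> s - t \<in> \<int>) \<and>
     (\<forall>t. snd (\<gamma> t) \<in> \<int> \<longrightarrow> snd (vector_derivative \<gamma> (at t)) \<noteq> 0) \<and>
     snd w \<notin> \<int> \<and> snd z \<notin> \<int> \<and>
     (\<forall>t u. int_vec u \<longrightarrow> w \<noteq> \<gamma> t + u \<and> z \<noteq> \<gamma> t + u) \<and>
     \<not> int_vec (w - z) \<and>
     (\<forall>u s t. int_vec u \<longrightarrow> is_bigon (\<lambda>r. \<gamma> r + u) s t \<longrightarrow>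
        (let C = bigon_boundary (\<lambda>r. \<gamma> r + u) s t in
          (\<forall>a\<in>C \<union> inside C. \<forall>b\<in>C \<union> inside C. int_vec (a - b) \<longrightarrow> a = b) \<longrightarrow>
          (\<exists>m\<in>inside C. int_vec (m - w) \<or> int_vec (m - z))))"

end

theory Submission
  imports Defs
begin

text \<open>Number the points of \<open>\<alpha> \<inter> \<beta>\<close> along \<open>\<beta>\<close> as \<open>x\<^sub>0 = b, x\<^sub>1, \<dots>\<close>. Up to the next
  turning point they move monotonically along \<open>\<alpha>\<close>, in direction \<open>\<delta> = \<plusminus>1\<close> say, and as
  \<open>\<beta>\<close> crosses \<open>\<alpha>\<close> transversally, the arc of \<open>\<beta>\<close> from \<open>x\<^sub>\<ell>\<close> to \<open>x\<^sub>\<ell>\<^sub>+\<^sub>1\<close> lies on the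
  side \<open>(-1)\<^sup>\<ell> \<epsilon>\<close> of \<open>\<alpha>\<close>. This arc and the segment of \<open>\<alpha>\<close> between its ends form a
  Jordan curve bounding an embedded bigon, which by the orientation conventions runs
  from \<open>x\<^sub>\<ell>\<close> to \<open>x\<^sub>\<ell>\<^sub>+\<^sub>1\<close> if \<open>(-1)\<^sup>\<ell> \<epsilon> = \<delta>\<close> and the other way round otherwise. Hence
  \<open>gr x\<^sub>\<ell>\<^sub>+\<^sub>1 - gr x\<^sub>\<ell> = -(-1)\<^sup>\<ell> \<delta> \<epsilon>\<close>, and these steps cancel in pairs. Finally, the bigon
  at \<open>b\<close> lies on the side \<open>-\<epsilon>\<close> of the arc ending at \<open>b\<close>, and since \<open>b\<close> is a turning point
  its direction along \<open>\<alpha>\<close> is \<open>\<delta>\<close> if \<open>b\<close> is positive and \<open>-\<delta>\<close> if \<open>b\<close> is negative; so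
  \<open>-\<delta> \<epsilon>\<close> is \<open>1\<close> resp. \<open>-1\<close>.\<close>

section \<open>Sign changes of real functions\<close>

lemma sgn_eq_if_no_zero:
  fixes h :: "real \<Rightarrow> real"
  assumes "continuous_on {a..b} h" and "\<And>x. x \<in> {a..b} \<Longrightarrow> h x \<noteq> 0"
    and "x \<in> {a..b}" and "y \<in> {a..b}"
  shows "sgn (h x) = sgn (h y)"
proof -
  have conn: "connected (h ` {a..b})"
    using assms(1) by (rule connected_continuous_image) simp
  have "0 \<notin> h ` {a..b}" using assms(2) by force
  then have "\<not> (h x < 0 \<and> 0 < h y)" "\<not> (h y < 0 \<and> 0 < h x)"
    using connectedD_interval[OF conn] assms(3,4) by (meson imageI less_le_not_le)+
  moreover have "h x \<noteq> 0" "h y \<noteq> 0" using assms(2-4) by auto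
  ultimately show ?thesis by (auto simp: sgn_real_def)
qed

lemma sgn_near_simple_zero:
  fixes h :: "real \<Rightarrow> real"
  assumes "(h has_real_derivative D) (at x)" and "D \<noteq> 0" and "h x = 0"
  obtains d where "0 < d"
    and "\<And>e. 0 < e \<Longrightarrow> e < d \<Longrightarrow> sgn (h (x + e)) = sgn D \<and> sgn (h (x - e)) = - sgn D"
proof -
  have increasing: "\<exists>d>0. \<forall>e. 0 < e \<and> e < d \<longrightarrow> 0 < g (x + e) \<and> g (x - e) < 0"
    if g: "(g has_real_derivative E) (at x)" "0 < E" "g x = 0" for g E
  proof -
    obtain d1 where "0 < d1" "\<And>e. 0 < e \<Longrightarrow> e < d1 \<Longrightarrow> g x < g (x + e)"
      using DERIV_pos_inc_right[OF g(1,2)] by blast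
    moreover obtain d2 where "0 < d2" "\<And>e. 0 < e \<Longrightarrow> e < d2 \<Longrightarrow> g (x - e) < g x"
      using DERIV_pos_inc_left[OF g(1,2)] by blast
    ultimately show ?thesis using g(3) by (intro exI[of _ "min d1 d2"]) auto
  qed
  show ?thesis
  proof (cases "0 < D")
    case True
    then show ?thesis using increasing[OF assms(1) True assms(3)] that by auto
  next
    case False
    then have "((\<lambda>y. - h y) has_real_derivative - D) (at x)" "0 < - D"
      using assms(1,2) by (auto intro: derivative_intros)
    then show ?thesis using increasing[of "\<lambda>y. - h y" "- D"] assms(3) that False by auto
  qed
qed

lemma finite_zeros_if_simple:
  fixes h :: "real \<Rightarrow> real"
  assumes "continuous_on UNIV h" and "bounded {x. h x = 0}"
    and "\<And>x. h x = 0 \<Longrightarrow> \<exists>D. D \<noteq> 0 \<and> (h has_real_derivative D) (at x)"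
  shows "finite {x. h x = 0}"
proof (rule ccontr)
  let ?Z = "{x. h x = 0}"
  assume "infinite ?Z"
  then obtain x where x: "x islimpt ?Z"
    using bounded_infinite_imp_islimpt[OF subset_refl assms(2)] by blast
  have "closed ?Z" using assms(1) by (intro closed_Collect_eq continuous_intros) auto
  then have "h x = 0" using x closed_limpt by blast
  then obtain D where "D \<noteq> 0" "(h has_real_derivative D) (at x)" using assms(3) by blast
  then obtain d where d: "0 < d"
    "\<And>e. 0 < e \<Longrightarrow> e < d \<Longrightarrow> sgn (h (x + e)) = sgn D \<and> sgn (h (x - e)) = - sgn D"
    using sgn_near_simple_zero \<open>h x = 0\<close> by metis
  obtain y where y: "h y = 0" "y \<noteq> x" "dist y x < d"
    using x d(1) unfolding islimpt_approachable by blast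
  show False
  proof (cases "x < y")
    case True
    then show False using d(2)[of "y - x"] y \<open>D \<noteq> 0\<close> by (auto simp: dist_real_def sgn_eq_0_iff)
  next
    case False
    then show False using d(2)[of "x - y"] y \<open>D \<noteq> 0\<close> by (auto simp: dist_real_def sgn_eq_0_iff)
  qed
qed

section \<open>The bigon cut off by an arc of \<open>\<beta>\<close>\<close>

lemma subset_closure_inside_if_homeomorphic_sphere:
  fixes J :: "'a::euclidean_space set" and a :: 'a
  assumes hom: "J homeomorphic sphere a r" and "0 < r" and "2 \<le> DIM('a)"
  shows "J \<subseteq> closure (inside J)"
proof -
  have "compact J" using homeomorphic_compactness[OF hom] by simp
  then have "connected (outside J)" using connected_outside assms(3) compact_imp_bounded by blast
  moreover have "\<not> connected (- J)" using Jordan_Brouwer_separation[OF hom \<open>0 < r\<close>] .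
  ultimately have "inside J \<noteq> {}" using inside_Un_outside[of J] by force
  then obtain x where x: "x \<in> inside J" by blast
  define T where "T = connected_component_set (- J) x"
  have "x \<in> - J" using x inside_no_overlap[of J] by blast
  then have "T \<in> components (- J)" unfolding T_def components_iff by blast
  then have "frontier T = J" using Jordan_Brouwer_frontier[OF hom] assms(3) by blast
  moreover have "T \<subseteq> inside J" unfolding T_def using x inside_same_component by blast
  ultimately show ?thesis using closure_mono unfolding frontier_def by blast
qed

text \<open>Points of the inside accumulate at \<open>m\<close> (Jordan-Brouwer), and the open half-plane
  below lies outside; so some inside point near \<open>m\<close> can be pushed into the half-disc,
  which is connected and misses \<open>J\<close>.\<close>
lemma half_ball_subset_inside:
  fixes J :: "(real \<times> real) set" and m :: "real \<times> real" and \<epsilon> \<delta> :: real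
  defines "H \<equiv> ball m \<delta> \<inter> {y. 0 < \<epsilon> * snd y}"
  assumes hom: "J homeomorphic sphere (0::real \<times> real) 1" and "m \<in> J" and "0 < \<delta>" and "\<bar>\<epsilon>\<bar> = 1"
    and J_half_plane: "J \<subseteq> {y. 0 \<le> \<epsilon> * snd y}" and "H \<inter> J = {}"
  shows "H \<subseteq> inside J"
proof -
  have "convex {y :: real \<times> real. 0 \<le> \<epsilon> * snd y}"
    using convex_halfspace_ge[of 0 "(0, \<epsilon>)"] by (simp add: inner_prod_def)
  then have outside: "{y. \<epsilon> * snd y < 0} \<subseteq> outside J"
    using outside_subset_convex[OF _ J_half_plane] by (simp add: Compl_eq not_le)
  have "m \<in> closure (inside J)"
    using subset_closure_inside_if_homeomorphic_sphere[OF hom] \<open>m \<in> J\<close> by force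
  moreover have "0 < \<delta> / 2" using \<open>0 < \<delta>\<close> by simp
  ultimately obtain y where y: "y \<in> inside J" "dist y m < \<delta> / 2"
    unfolding closure_approachable by blast
  have "0 \<le> \<epsilon> * snd y"
  proof (rule ccontr)
    assume "\<not> 0 \<le> \<epsilon> * snd y"
    then have "y \<in> outside J" using outside by auto
    then show False using y(1) inside_Int_outside[of J] by blast
  qed
  have "closed J" using homeomorphic_compactness[OF hom] compact_imp_closed by auto
  then obtain r where "0 < r" "ball y r \<subseteq> inside J"
    using y(1) open_inside open_contains_ball by blast
  define k where "k = min r (\<delta> / 2) / 2"
  define y' where "y' = y + (0, \<epsilon> * k)"
  have "0 < k" "k < r" "k < \<delta> / 2" using \<open>0 < r\<close> \<open>0 < \<delta>\<close> unfolding k_def by auto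
  have "\<epsilon> * \<epsilon> = 1" using \<open>\<bar>\<epsilon>\<bar> = 1\<close> by (metis abs_mult_self_eq mult_1)
  have "dist y y' = k"
    using \<open>\<bar>\<epsilon>\<bar> = 1\<close> \<open>0 < k\<close> by (simp add: y'_def dist_norm norm_Pair abs_mult)
  then have "y' \<in> inside J" using \<open>k < r\<close> \<open>ball y r \<subseteq> inside J\<close> by auto
  have "dist m y' < \<delta>"
    using dist_triangle[of m y' y] \<open>dist y y' = k\<close> \<open>k < \<delta> / 2\<close> y(2) by (simp add: dist_commute)
  moreover have "0 < \<epsilon> * snd y'"
    using \<open>\<epsilon> * \<epsilon> = 1\<close> \<open>0 \<le> \<epsilon> * snd y\<close> \<open>0 < k\<close> by (simp add: y'_def distrib_left mult.assoc[symmetric])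
  ultimately have "y' \<in> H" by (simp add: H_def)
  have "convex H"
    unfolding H_def using convex_halfspace_gt[of 0 "(0, \<epsilon>)"]
    by (intro convex_Int convex_ball) (simp add: inner_prod_def)
  then have "H \<subseteq> connected_component_set (- J) y'"
    using connected_component_maximal[OF \<open>y' \<in> H\<close> convex_connected] \<open>H \<inter> J = {}\<close> by blast
  then show ?thesis using inside_same_component \<open>y' \<in> inside J\<close> by blast
qed

lemma snd_eq_0_closed_segment:
  fixes a b :: "real \<times> real"
  assumes "snd a = 0" and "snd b = 0" and "y \<in> closed_segment a b"
  shows "snd y = 0"
  using assms by (auto simp: closed_segment_def)

lemma image_closed_segment_Int_chord:
  fixes c :: "real \<Rightarrow> real \<times> real"
  assumes "s \<in> alpha_pts c" and "t \<in> alpha_pts c"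
    and off_alpha: "\<And>u. u \<in> open_segment s t \<Longrightarrow> snd (c u) \<noteq> 0"
  shows "c ` closed_segment s t \<inter> closed_segment (c s) (c t) = {c s, c t}"
proof
  show "c ` closed_segment s t \<inter> closed_segment (c s) (c t) \<subseteq> {c s, c t}"
  proof
    fix y assume y: "y \<in> c ` closed_segment s t \<inter> closed_segment (c s) (c t)"
    then obtain u where u: "u \<in> closed_segment s t" "y = c u" by blast
    have "snd y = 0" using snd_eq_0_closed_segment[of "c s" "c t" y] y assms(1,2) by (simp add: alpha_pts_def)
    then have "u \<notin> open_segment s t" using off_alpha u(2) by blast
    then show "y \<in> {c s, c t}" using u by (auto simp: open_segment_def)
  qed
qed auto

lemma bigon_boundary_homeomorphic_circle:
  fixes c :: "real \<Rightarrow> real \<times> real"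
  assumes cont: "continuous_on (closed_segment s t) c" and inj: "inj_on c (closed_segment s t)"
    and "s \<noteq> t" and "s \<in> alpha_pts c" and "t \<in> alpha_pts c"
    and "\<And>u. u \<in> open_segment s t \<Longrightarrow> snd (c u) \<noteq> 0"
  shows "bigon_boundary c s t homeomorphic sphere (0::real \<times> real) 1"
proof -
  define c_arc where "c_arc = c \<circ> linepath s t"
  define chord where "chord = linepath (c t) (c s)"
  have "c s \<noteq> c t" using inj_onD[OF inj] \<open>s \<noteq> t\<close> by (meson ends_in_segment)
  have seg: "linepath s t ` {0..1} = closed_segment s t"
    using path_image_linepath unfolding path_image_def .
  have "arc c_arc"
    unfolding c_arc_def arc_def
  proof
    show "path (c \<circ> linepath s t)"
      using path_continuous_image[of "linepath s t" c] cont by (simp add: path_image_def seg)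
    show "inj_on (c \<circ> linepath s t) {0..1}"
      using comp_inj_on[OF inj_on_linepath[OF \<open>s \<noteq> t\<close>]] inj by (simp add: seg)
  qed
  moreover have "arc chord" using \<open>c s \<noteq> c t\<close> by (simp add: chord_def)
  moreover have "path_image c_arc \<inter> path_image chord \<subseteq> {pathstart c_arc, pathstart chord}"
    using image_closed_segment_Int_chord[of s c t] assms(4-6)
    by (simp add: c_arc_def chord_def path_image_compose closed_segment_commute pathstart_compose)
  ultimately have "simple_path (c_arc +++ chord)"
    by (intro simple_path_join_loop) (auto simp: c_arc_def chord_def pathstart_compose pathfinish_compose)
  moreover have "path_image (c_arc +++ chord) = bigon_boundary c s t"
    by (simp add: c_arc_def chord_def path_image_join path_image_compose pathstart_compose
        pathfinish_compose bigon_boundary_def closed_segment_commute)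
  ultimately have "bigon_boundary c s t homeomorphic sphere (0::complex) 1"
    using homeomorphic_simple_path_image_circle[of "c_arc +++ chord"]
    by (simp add: c_arc_def chord_def pathstart_compose pathfinish_compose)
  also have "sphere (0::complex) 1 homeomorphic sphere (0::real \<times> real) 1"
    by (rule homeomorphic_spheres_gen) auto
  finally show ?thesis .
qed

lemma bigon_boundary_near_midpoint_on_alpha:
  fixes c :: "real \<Rightarrow> real \<times> real"
  assumes cont: "continuous_on (closed_segment s t) c" and inj: "inj_on c (closed_segment s t)"
    and "s \<noteq> t" and s: "s \<in> alpha_pts c" and t: "t \<in> alpha_pts c"
    and off_alpha: "\<And>u. u \<in> open_segment s t \<Longrightarrow> snd (c u) \<noteq> 0"
  obtains \<delta> where "0 < \<delta>"
    and "ball (midpoint (c s) (c t)) \<delta> \<inter> {y. snd y \<noteq> 0} \<inter> bigon_boundary c s t = {}"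
proof -
  define m where "m = midpoint (c s) (c t)"
  have "c s \<noteq> c t" using inj_onD[OF inj] \<open>s \<noteq> t\<close> by (meson ends_in_segment)
  have "m \<notin> c ` closed_segment s t"
  proof
    assume "m \<in> c ` closed_segment s t"
    moreover have "m \<in> closed_segment (c s) (c t)" by (simp add: m_def midpoint_in_closed_segment)
    ultimately have "m \<in> {c s, c t}" using image_closed_segment_Int_chord[OF s t off_alpha] by blast
    then show False using \<open>c s \<noteq> c t\<close> by (auto simp: m_def)
  qed
  moreover have "compact (c ` closed_segment s t)"
    using cont by (rule compact_continuous_image) simp
  ultimately obtain \<delta> where "0 < \<delta>" and \<delta>: "\<And>x. x \<in> c ` closed_segment s t \<Longrightarrow> \<delta> \<le> dist m x"
    using separate_point_closed[OF compact_imp_closed] by metis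
  have "y \<notin> c ` closed_segment s t" if "y \<in> ball m \<delta>" for y
    using that \<delta> by (metis mem_ball not_le)
  moreover have "y \<notin> closed_segment (c s) (c t)" if "snd y \<noteq> 0" for y
    using snd_eq_0_closed_segment[of "c s" "c t" y] s t that by (auto simp: alpha_pts_def)
  ultimately show ?thesis
    using that[OF \<open>0 < \<delta>\<close>] unfolding m_def[symmetric] bigon_boundary_def by blast
qed

lemma bigon_boundary_subset_half_plane:
  fixes c :: "real \<Rightarrow> real \<times> real"
  assumes s: "s \<in> alpha_pts c" and t: "t \<in> alpha_pts c"
    and side: "\<And>u. u \<in> open_segment s t \<Longrightarrow> 0 < \<epsilon> * snd (c u)"
  shows "bigon_boundary c s t \<subseteq> {y. 0 \<le> \<epsilon> * snd y}"
proof
  fix y assume "y \<in> bigon_boundary c s t"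
  then consider u where "u \<in> closed_segment s t" "y = c u" | "y \<in> closed_segment (c s) (c t)"
    unfolding bigon_boundary_def by blast
  then show "y \<in> {y. 0 \<le> \<epsilon> * snd y}"
  proof cases
    case 1
    then show ?thesis using side[of u] s t
      by (cases "u \<in> open_segment s t") (auto simp: open_segment_def alpha_pts_def)
  next
    case 2
    then show ?thesis using snd_eq_0_closed_segment[of "c s" "c t" y] s t by (simp add: alpha_pts_def)
  qed
qed

lemma is_bigon_if_side:
  fixes c :: "real \<Rightarrow> real \<times> real"
  assumes cont: "continuous_on (closed_segment s t) c" and inj: "inj_on c (closed_segment s t)"
    and "s \<noteq> t" and s: "s \<in> alpha_pts c" and t: "t \<in> alpha_pts c"
    and side: "\<And>u. u \<in> open_segment s t \<Longrightarrow> 0 < \<epsilon> * snd (c u)"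
    and \<epsilon>: "sgn (fst (c t) - fst (c s)) = \<epsilon>"
  shows "is_bigon c s t"
proof -
  define m where "m = midpoint (c s) (c t)"
  have off_alpha: "\<And>u. u \<in> open_segment s t \<Longrightarrow> snd (c u) \<noteq> 0" using side by force
  have "c s \<noteq> c t" using inj_onD[OF inj] \<open>s \<noteq> t\<close> by (meson ends_in_segment)
  then have "fst (c s) \<noteq> fst (c t)" using s t by (auto simp: alpha_pts_def prod_eq_iff)
  then have "\<bar>\<epsilon>\<bar> = 1" using \<epsilon> abs_sgn_eq_1 by fastforce
  then have "\<epsilon> * \<epsilon> = 1" by (metis abs_mult_self_eq mult_1)
  obtain \<delta> where "0 < \<delta>" and "ball m \<delta> \<inter> {y. snd y \<noteq> 0} \<inter> bigon_boundary c s t = {}"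
    using bigon_boundary_near_midpoint_on_alpha[OF cont inj \<open>s \<noteq> t\<close> s t off_alpha] unfolding m_def by blast
  moreover have "{y. 0 < \<epsilon> * snd y} \<subseteq> {y. snd y \<noteq> 0}" by auto
  ultimately have "ball m \<delta> \<inter> {y. 0 < \<epsilon> * snd y} \<inter> bigon_boundary c s t = {}" by blast
  moreover have "m \<in> bigon_boundary c s t"
    by (simp add: m_def bigon_boundary_def midpoint_in_closed_segment)
  ultimately have inside: "ball m \<delta> \<inter> {y. 0 < \<epsilon> * snd y} \<subseteq> inside (bigon_boundary c s t)"
    using half_ball_subset_inside bigon_boundary_homeomorphic_circle[OF cont inj \<open>s \<noteq> t\<close> s t off_alpha]
      bigon_boundary_subset_half_plane[OF s t side] \<open>0 < \<delta>\<close> \<open>\<bar>\<epsilon>\<bar> = 1\<close> by blast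
  have "snd m = 0" using s t by (simp add: m_def midpoint_def alpha_pts_def)
  have "m + (0, \<epsilon> * e) \<in> inside (bigon_boundary c s t)" if "e \<in> {0<..<\<delta>}" for e
  proof -
    have "dist m (m + (0, \<epsilon> * e)) < \<delta>"
      using that \<open>\<bar>\<epsilon>\<bar> = 1\<close> by (simp add: dist_norm norm_Pair abs_mult)
    moreover have "0 < \<epsilon> * snd (m + (0, \<epsilon> * e))"
      using that \<open>snd m = 0\<close> \<open>\<epsilon> * \<epsilon> = 1\<close> by (simp add: mult.assoc[symmetric])
    ultimately show ?thesis using inside by auto
  qed
  then have "\<forall>\<^sub>F e in at_right 0. m + (0, \<epsilon> * e) \<in> inside (bigon_boundary c s t)"
    using \<open>0 < \<delta>\<close> by (rule eventually_at_rightI)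
  moreover have "\<forall>\<^sub>F u in at r within open_segment s t. 0 < \<epsilon> * snd (c u)" for r
    unfolding eventually_at_filter by (auto simp: side intro!: always_eventually)
  ultimately show ?thesis
    using \<open>s \<noteq> t\<close> s t image_closed_segment_Int_chord[OF s t off_alpha]
    unfolding is_bigon_def Let_def \<epsilon> m_def by auto
qed

lemma is_bigon_side:
  fixes c :: "real \<Rightarrow> real \<times> real"
  assumes bigon: "is_bigon c s t" and side: "\<And>u. u \<in> open_segment s t \<Longrightarrow> 0 < \<epsilon> * snd (c u)"
    and "\<bar>\<epsilon>\<bar> = 1"
  shows "sgn (fst (c t) - fst (c s)) = \<epsilon>"
proof -
  define \<sigma> where "\<sigma> = sgn (fst (c t) - fst (c s))"
  have "s \<noteq> t" and corner: "\<forall>\<^sub>F u in at s within open_segment s t. 0 < \<sigma> * snd (c u)"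
    using bigon unfolding is_bigon_def Let_def \<sigma>_def by auto
  have "s \<in> closure (open_segment s t)" using \<open>s \<noteq> t\<close> by (simp add: closure_open_segment)
  moreover have "s \<notin> open_segment s t" by (simp add: open_segment_def)
  ultimately have "\<not> trivial_limit (at s within open_segment s t)"
    by (simp add: trivial_limit_within closure_def)
  moreover have "\<forall>\<^sub>F u in at s within open_segment s t. 0 < \<epsilon> * snd (c u)"
    unfolding eventually_at_filter by (auto simp: side intro!: always_eventually)
  ultimately obtain u where "0 < \<sigma> * snd (c u)" "0 < \<epsilon> * snd (c u)"
    using eventually_happens[OF eventually_conj[OF corner]] by blast
  then show ?thesis
    using \<open>\<bar>\<epsilon>\<bar> = 1\<close> by (auto simp: \<sigma>_def sgn_real_def zero_less_mult_iff abs_if split: if_splits)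
qed

section \<open>Consecutive intersection points\<close>

definition consecutive :: "(real \<Rightarrow> real \<times> real) \<Rightarrow> real \<Rightarrow> real \<Rightarrow> bool" where
  "consecutive c s t \<longleftrightarrow>
     s \<in> alpha_pts c \<and> t \<in> alpha_pts c \<and> s < t \<and> (\<forall>u\<in>alpha_pts c. \<not> (s < u \<and> u < t))"

definition arc_side :: "(real \<Rightarrow> real \<times> real) \<Rightarrow> real \<Rightarrow> real \<Rightarrow> real" where
  "arc_side c s t = sgn (snd (c ((s + t) / 2)))"

text \<open>Numbering the points of \<open>alpha_pts c\<close> from \<open>x\<^sub>0 = b\<close> onwards along the
  curve, \<open>t = x\<^sub>\<ell>\<close> with \<open>\<ell> = alpha_index c b t\<close>.\<close>
definition alpha_index :: "(real \<Rightarrow> real \<times> real) \<Rightarrow> real \<Rightarrow> real \<Rightarrow> nat" where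
  "alpha_index c b t = card {s \<in> alpha_pts c. b \<le> s \<and> s < t}"

lemma alpha_index_self [simp]: "alpha_index c b b = 0"
proof -
  have "{s \<in> alpha_pts c. b \<le> s \<and> s < b} = {}" by auto
  then show ?thesis unfolding alpha_index_def by (metis card.empty)
qed

lemma consecutive_pred_pt:
  assumes "finite (alpha_pts c)" and "t \<in> alpha_pts c" and "s \<in> alpha_pts c" and "s < t"
  shows "consecutive c (pred_pt c t) t" and "s \<le> pred_pt c t"
proof -
  let ?S = "{u \<in> alpha_pts c. u < t}"
  have "finite ?S" "s \<in> ?S" using assms by auto
  then have "pred_pt c t \<in> ?S" "\<And>u. u \<in> ?S \<Longrightarrow> u \<le> pred_pt c t"
    unfolding pred_pt_def using Max_in Max_ge by blast+
  then show "consecutive c (pred_pt c t) t" "s \<le> pred_pt c t"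
    unfolding consecutive_def using assms(2) \<open>s \<in> ?S\<close> by force+
qed

lemma consecutive_succ_pt:
  assumes "finite (alpha_pts c)" and "s \<in> alpha_pts c" and "t \<in> alpha_pts c" and "s < t"
  shows "consecutive c s (succ_pt c s)" and "succ_pt c s \<le> t"
proof -
  let ?S = "{u \<in> alpha_pts c. s < u}"
  have "finite ?S" "t \<in> ?S" using assms by auto
  then have "succ_pt c s \<in> ?S" "\<And>u. u \<in> ?S \<Longrightarrow> succ_pt c s \<le> u"
    unfolding succ_pt_def using Min_in Min_le by blast+
  then show "consecutive c s (succ_pt c s)" "succ_pt c s \<le> t"
    unfolding consecutive_def using assms(2) \<open>t \<in> ?S\<close> by force+
qed

lemma succ_pt_eq_if_consecutive:
  assumes "finite (alpha_pts c)" and "consecutive c s t"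
  shows "succ_pt c s = t"
proof -
  have "s \<in> alpha_pts c" "t \<in> alpha_pts c" "s < t" using assms(2) by (auto simp: consecutive_def)
  then have "consecutive c s (succ_pt c s)" "succ_pt c s \<le> t"
    using consecutive_succ_pt[OF assms(1)] by auto
  then show ?thesis using assms(2) unfolding consecutive_def by force
qed

lemma alpha_index_pred_pt:
  assumes "finite (alpha_pts c)" and "b \<in> alpha_pts c" and "t \<in> alpha_pts c" and "b < t"
  shows "alpha_index c b t = Suc (alpha_index c b (pred_pt c t))"
proof -
  define p where "p = pred_pt c t"
  have "consecutive c p t" "b \<le> p" using consecutive_pred_pt[OF assms(1,3,2,4)] by (auto simp: p_def)
  then have "{s \<in> alpha_pts c. b \<le> s \<and> s < t} = insert p {s \<in> alpha_pts c. b \<le> s \<and> s < p}"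
    unfolding consecutive_def by force
  then show ?thesis unfolding alpha_index_def p_def[symmetric] using assms(1) by simp
qed

lemma alpha_pts_pred_induct [consumes 4, case_names base step]:
  assumes "finite (alpha_pts c)" and "b \<in> alpha_pts c" and "t \<in> alpha_pts c" and "b \<le> t"
    and base: "P b"
    and step: "\<And>t. t \<in> alpha_pts c \<Longrightarrow> b < t \<Longrightarrow> P (pred_pt c t) \<Longrightarrow> P t"
  shows "P t"
  using assms(3,4)
proof (induction "alpha_index c b t" arbitrary: t rule: less_induct)
  case less
  show ?case
  proof (cases "t = b")
    case False
    then have "b < t" using less.prems by simp
    moreover have "consecutive c (pred_pt c t) t" "b \<le> pred_pt c t"
      using consecutive_pred_pt[OF assms(1) less.prems(1) assms(2) \<open>b < t\<close>] by auto
    ultimately show ?thesis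
      using less.hyps[of "pred_pt c t"] alpha_index_pred_pt[OF assms(1,2) less.prems(1)] step less.prems(1)
      unfolding consecutive_def by simp
  qed (simp add: base)
qed

lemma fst_neq_if_alpha_pts:
  assumes "inj c" and "s \<in> alpha_pts c" and "t \<in> alpha_pts c" and "s \<noteq> t"
  shows "fst (c s) \<noteq> fst (c t)"
proof
  assume "fst (c s) = fst (c t)"
  then have "c s = c t" using assms(2,3) by (simp add: alpha_pts_def prod_eq_iff)
  then show False using assms(1,4) by (simp add: inj_eq)
qed

lemma turning_iff_sgn_fst:
  assumes "finite (alpha_pts c)" and "inj c" and "t \<in> alpha_pts c"
    and "s\<^sub>1 \<in> alpha_pts c" "s\<^sub>1 < t" and "s\<^sub>2 \<in> alpha_pts c" "t < s\<^sub>2"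
  shows "turning c t \<longleftrightarrow>
    sgn (fst (c (pred_pt c t)) - fst (c t)) = sgn (fst (c (succ_pt c t)) - fst (c t))"
proof -
  have "consecutive c (pred_pt c t) t" "consecutive c t (succ_pt c t)"
    using consecutive_pred_pt[OF assms(1,3,4,5)] consecutive_succ_pt[OF assms(1,3,6,7)] by auto
  then have "fst (c (pred_pt c t)) \<noteq> fst (c t)" "fst (c (succ_pt c t)) \<noteq> fst (c t)"
    using fst_neq_if_alpha_pts[OF assms(2)] unfolding consecutive_def by auto
  then show ?thesis
    using assms(3-7) unfolding turning_def Let_def by (auto simp: sgn_real_def)
qed

lemma arc_side_eq_sgn:
  assumes "continuous_on {s..t} c" and "consecutive c s t" and "u \<in> {s<..<t}"
  shows "arc_side c s t = sgn (snd (c u))"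
proof -
  define m where "m = (s + t) / 2"
  have "m \<in> {s<..<t}" using assms(2) by (auto simp: m_def consecutive_def)
  have "{min u m..max u m} \<subseteq> {s<..<t}" using \<open>m \<in> {s<..<t}\<close> assms(3) by auto
  moreover have "snd (c x) \<noteq> 0" if "x \<in> {s<..<t}" for x
    using assms(2) that by (auto simp: consecutive_def alpha_pts_def)
  moreover have "continuous_on {min u m..max u m} (\<lambda>x. snd (c x))"
    using calculation(1) by (intro continuous_intros continuous_on_subset[OF assms(1)]) auto
  ultimately have "sgn (snd (c m)) = sgn (snd (c u))"
    by (intro sgn_eq_if_no_zero[of "min u m" "max u m"]) auto
  then show ?thesis by (simp add: arc_side_def m_def)
qed

locale transverse_curve =
  fixes \<beta> :: "real \<Rightarrow> real \<times> real"
  assumes continuous: "continuous_on UNIV \<beta>"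
    and inj: "inj \<beta>"
    and finite_alpha_pts: "finite (alpha_pts \<beta>)"
    and transverse: "\<And>t. t \<in> alpha_pts \<beta> \<Longrightarrow> \<exists>D. D \<noteq> 0 \<and> ((\<lambda>r. snd (\<beta> r)) has_real_derivative D) (at t)"
begin

lemma continuous_on_curve: "continuous_on S \<beta>"
  using continuous_on_subset[OF continuous] by blast

lemma arc_side_pos:
  assumes "consecutive \<beta> s t" and "u \<in> open_segment s t"
  shows "0 < arc_side \<beta> s t * snd (\<beta> u)"
proof -
  have "u \<in> {s<..<t}" "snd (\<beta> u) \<noteq> 0"
    using assms by (auto simp: consecutive_def alpha_pts_def open_segment_eq_real_ivl)
  then show ?thesis using arc_side_eq_sgn[OF continuous_on_curve assms(1)] by (simp add: sgn_real_def)
qed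

lemma abs_arc_side:
  assumes "consecutive \<beta> s t"
  shows "\<bar>arc_side \<beta> s t\<bar> = 1"
  using arc_side_pos[OF assms, of "(s + t) / 2"] assms
  by (auto simp: consecutive_def open_segment_eq_real_ivl abs_sgn_eq arc_side_def)

text \<open>At a transverse intersection the curve crosses \<open>\<alpha>\<close>.\<close>
lemma arc_side_alternates:
  assumes "consecutive \<beta> a s" and "consecutive \<beta> s t"
  shows "arc_side \<beta> a s = - arc_side \<beta> s t"
proof -
  have "s \<in> alpha_pts \<beta>" "a < s" "s < t" using assms by (auto simp: consecutive_def)
  then obtain D where "((\<lambda>r. snd (\<beta> r)) has_real_derivative D) (at s)" "D \<noteq> 0" "snd (\<beta> s) = 0"
    using transverse by (auto simp: alpha_pts_def)
  then obtain d where "0 < d"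
    and d: "\<And>e. 0 < e \<Longrightarrow> e < d \<Longrightarrow> sgn (snd (\<beta> (s + e))) = sgn D \<and> sgn (snd (\<beta> (s - e))) = - sgn D"
    using sgn_near_simple_zero by metis
  define e where "e = min d (min (s - a) (t - s)) / 2"
  have "0 < e" "e < d" "e < s - a" "e < t - s"
    using \<open>0 < d\<close> \<open>a < s\<close> \<open>s < t\<close> by (auto simp: e_def)
  then have "arc_side \<beta> a s = - sgn D" "arc_side \<beta> s t = sgn D"
    using d arc_side_eq_sgn[OF continuous_on_curve assms(1), of "s - e"]
      arc_side_eq_sgn[OF continuous_on_curve assms(2), of "s + e"] by auto
  then show ?thesis by simp
qed

text \<open>The arc from \<open>s\<close> to \<open>t\<close> bounds a bigon from \<open>s\<close> to \<open>t\<close> if it lies on the side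
  \<open>sgn (fst (\<beta> t) - fst (\<beta> s))\<close> of \<open>\<alpha>\<close>, and a bigon from \<open>t\<close> to \<open>s\<close> otherwise.\<close>
lemma grading_step:
  fixes gr :: "real \<Rightarrow> int"
  assumes graded: "\<forall>s t. is_bigon \<beta> s t \<longrightarrow> gr s = gr t + 1" and "consecutive \<beta> s t"
  shows "of_int (gr t - gr s) = - sgn (fst (\<beta> t) - fst (\<beta> s)) * arc_side \<beta> s t"
proof -
  define \<epsilon> where "\<epsilon> = arc_side \<beta> s t"
  have s: "s \<in> alpha_pts \<beta>" and t: "t \<in> alpha_pts \<beta>" and "s \<noteq> t"
    using assms(2) by (auto simp: consecutive_def)
  have "\<bar>\<epsilon>\<bar> = 1" using abs_arc_side[OF assms(2)] by (simp add: \<epsilon>_def)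
  then have "\<epsilon> * \<epsilon> = 1" by (metis abs_mult_self_eq mult_1)
  have "fst (\<beta> t) \<noteq> fst (\<beta> s)" using fst_neq_if_alpha_pts[OF inj t s] \<open>s \<noteq> t\<close> by simp
  then have "\<bar>sgn (fst (\<beta> t) - fst (\<beta> s))\<bar> = 1" by (simp add: abs_sgn_eq)
  have inj_seg: "inj_on \<beta> (closed_segment s t)" using inj inj_on_subset by blast
  have side: "\<And>u. u \<in> open_segment s t \<Longrightarrow> 0 < \<epsilon> * snd (\<beta> u)"
    using arc_side_pos[OF assms(2)] by (simp add: \<epsilon>_def)
  consider "sgn (fst (\<beta> t) - fst (\<beta> s)) = \<epsilon>" | "sgn (fst (\<beta> s) - fst (\<beta> t)) = \<epsilon>"
    using \<open>\<bar>\<epsilon>\<bar> = 1\<close> \<open>\<bar>sgn (fst (\<beta> t) - fst (\<beta> s))\<bar> = 1\<close>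
    by (metis abs_eq_iff minus_diff_eq sgn_minus)
  then show ?thesis
  proof cases
    case 1
    then have "is_bigon \<beta> s t" using is_bigon_if_side[OF continuous_on_curve inj_seg \<open>s \<noteq> t\<close> s t side] by blast
    then show ?thesis using graded 1 \<open>\<epsilon> * \<epsilon> = 1\<close> by (auto simp: \<epsilon>_def)
  next
    case 2
    then have "is_bigon \<beta> t s"
      using is_bigon_if_side[of t s \<beta> \<epsilon>] continuous_on_curve inj_seg \<open>s \<noteq> t\<close> s t side
      by (simp add: closed_segment_commute open_segment_commute)
    then show ?thesis using graded 2 \<open>\<epsilon> * \<epsilon> = 1\<close>
      by (auto simp: \<epsilon>_def sgn_minus[symmetric])
  qed
qed

lemma sgn_fst_pred_pt_between_turning:
  assumes "b \<in> alpha_pts \<beta>" and "t \<in> alpha_pts \<beta>" and "b < t"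
    and "\<forall>u\<in>alpha_pts \<beta>. b < u \<and> u < t \<longrightarrow> \<not> turning \<beta> u"
  shows "sgn (fst (\<beta> t) - fst (\<beta> (pred_pt \<beta> t))) = sgn (fst (\<beta> (succ_pt \<beta> b)) - fst (\<beta> b))"
  using finite_alpha_pts assms(1,2) less_imp_le[OF assms(3)] assms(3,4)
proof (induction t rule: alpha_pts_pred_induct)
  case (step t)
  define p where "p = pred_pt \<beta> t"
  have "consecutive \<beta> p t" "b \<le> p"
    using consecutive_pred_pt[OF finite_alpha_pts step(1) assms(1) step(2)] by (auto simp: p_def)
  show ?case
  proof (cases "p = b")
    case True
    then show ?thesis using succ_pt_eq_if_consecutive[OF finite_alpha_pts] \<open>consecutive \<beta> p t\<close>
      by (simp add: p_def)
  next
    case False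
    then have "b < p" "p \<in> alpha_pts \<beta>" "p < t"
      using \<open>b \<le> p\<close> \<open>consecutive \<beta> p t\<close> by (auto simp: consecutive_def)
    then have "\<not> turning \<beta> p" using step.prems(2) step(1) by auto
    then have "sgn (fst (\<beta> (pred_pt \<beta> p)) - fst (\<beta> p)) \<noteq> sgn (fst (\<beta> t) - fst (\<beta> p))"
      using turning_iff_sgn_fst[OF finite_alpha_pts inj \<open>p \<in> alpha_pts \<beta>\<close> assms(1) \<open>b < p\<close> step(1) \<open>p < t\<close>]
        succ_pt_eq_if_consecutive[OF finite_alpha_pts \<open>consecutive \<beta> p t\<close>] by simp
    moreover have "consecutive \<beta> (pred_pt \<beta> p) p"
      using consecutive_pred_pt[OF finite_alpha_pts \<open>p \<in> alpha_pts \<beta>\<close> assms(1) \<open>b < p\<close>] by simp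
    then have "fst (\<beta> (pred_pt \<beta> p)) \<noteq> fst (\<beta> p)" "fst (\<beta> t) \<noteq> fst (\<beta> p)"
      using fst_neq_if_alpha_pts[OF inj] \<open>consecutive \<beta> p t\<close> unfolding consecutive_def by auto
    moreover have "sgn (fst (\<beta> p) - fst (\<beta> (pred_pt \<beta> p))) = sgn (fst (\<beta> (succ_pt \<beta> b)) - fst (\<beta> b))"
      using step.IH \<open>b < p\<close> step.prems(2) \<open>p < t\<close> by (simp add: p_def)
    ultimately show ?thesis by (auto simp: p_def sgn_real_def split: if_splits)
  qed
qed simp

lemma arc_side_pred_pt:
  assumes "b \<in> alpha_pts \<beta>" and "t \<in> alpha_pts \<beta>" and "b < t"
  shows "arc_side \<beta> (pred_pt \<beta> t) t =
    (- 1) ^ alpha_index \<beta> b (pred_pt \<beta> t) * arc_side \<beta> b (succ_pt \<beta> b)"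
  using finite_alpha_pts assms(1,2) less_imp_le[OF assms(3)] assms(3)
proof (induction t rule: alpha_pts_pred_induct)
  case (step t)
  define p where "p = pred_pt \<beta> t"
  have "consecutive \<beta> p t" "b \<le> p"
    using consecutive_pred_pt[OF finite_alpha_pts step(1) assms(1) step(2)] by (auto simp: p_def)
  show ?case
  proof (cases "p = b")
    case True
    then show ?thesis using succ_pt_eq_if_consecutive[OF finite_alpha_pts] \<open>consecutive \<beta> p t\<close>
      by (simp add: p_def)
  next
    case False
    then have "b < p" "p \<in> alpha_pts \<beta>"
      using \<open>b \<le> p\<close> \<open>consecutive \<beta> p t\<close> by (auto simp: consecutive_def)
    then have "arc_side \<beta> (pred_pt \<beta> p) p = - arc_side \<beta> p t"
      using arc_side_alternates consecutive_pred_pt[OF finite_alpha_pts _ assms(1)] \<open>consecutive \<beta> p t\<close>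
      by blast
    then show ?thesis
      using step.IH \<open>b < p\<close> alpha_index_pred_pt[OF finite_alpha_pts assms(1) \<open>p \<in> alpha_pts \<beta>\<close>]
      by (simp add: p_def)
  qed
qed simp

lemma grading_alpha_index:
  fixes gr :: "real \<Rightarrow> int"
  assumes graded: "\<forall>s t. is_bigon \<beta> s t \<longrightarrow> gr s = gr t + 1"
    and "b \<in> alpha_pts \<beta>" and "t \<in> alpha_pts \<beta>" and "b \<le> t"
    and "\<forall>u\<in>alpha_pts \<beta>. b < u \<and> u < t \<longrightarrow> \<not> turning \<beta> u"
  shows "of_int (gr t - gr b) = (if even (alpha_index \<beta> b t) then 0
    else - sgn (fst (\<beta> (succ_pt \<beta> b)) - fst (\<beta> b)) * arc_side \<beta> b (succ_pt \<beta> b))"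
  using finite_alpha_pts assms(2-5)
proof (induction t rule: alpha_pts_pred_induct)
  case (step t)
  define p where "p = pred_pt \<beta> t"
  have "consecutive \<beta> p t" "b \<le> p"
    using consecutive_pred_pt[OF finite_alpha_pts step(1) assms(2) step(2)] by (auto simp: p_def)
  then have "p < t" by (simp add: consecutive_def)
  have "of_int (gr t - gr p) = - sgn (fst (\<beta> t) - fst (\<beta> p)) * arc_side \<beta> p t"
    by (rule grading_step[OF graded \<open>consecutive \<beta> p t\<close>])
  also have "\<dots> = - sgn (fst (\<beta> (succ_pt \<beta> b)) - fst (\<beta> b)) *
      ((- 1) ^ alpha_index \<beta> b p * arc_side \<beta> b (succ_pt \<beta> b))"
    using sgn_fst_pred_pt_between_turning[OF assms(2) step(1,2,4)] arc_side_pred_pt[OF assms(2) step(1,2)]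
    by (simp add: p_def)
  finally have "of_int (gr t - gr p) = - sgn (fst (\<beta> (succ_pt \<beta> b)) - fst (\<beta> b)) *
      ((- 1) ^ alpha_index \<beta> b p * arc_side \<beta> b (succ_pt \<beta> b))" .
  moreover have "alpha_index \<beta> b t = Suc (alpha_index \<beta> b p)"
    unfolding p_def using alpha_index_pred_pt[OF finite_alpha_pts assms(2) step(1,2)] .
  moreover have "of_int (gr p - gr b) = (if even (alpha_index \<beta> b p) then 0
      else - sgn (fst (\<beta> (succ_pt \<beta> b)) - fst (\<beta> b)) * arc_side \<beta> b (succ_pt \<beta> b))"
    using step.IH \<open>b \<le> p\<close> \<open>p < t\<close> step.prems by (simp add: p_def)
  ultimately show ?case by (simp add: minus_one_power_iff algebra_simps split: if_splits)
qed simp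

text \<open>The side of the bigon at \<open>b\<close> is read off at its corner \<open>b\<close>; at a turning point
  the predecessor and the successor of \<open>b\<close> lie in the same direction along \<open>\<alpha>\<close>.\<close>
lemma turning_sgn_fst_succ_pt:
  assumes "turning \<beta> b"
  shows "is_bigon \<beta> b (pred_pt \<beta> b) \<Longrightarrow>
      sgn (fst (\<beta> (succ_pt \<beta> b)) - fst (\<beta> b)) = - arc_side \<beta> b (succ_pt \<beta> b)"
    and "is_bigon \<beta> (pred_pt \<beta> b) b \<Longrightarrow>
      sgn (fst (\<beta> (succ_pt \<beta> b)) - fst (\<beta> b)) = arc_side \<beta> b (succ_pt \<beta> b)"
proof -
  define a b' where "a = pred_pt \<beta> b" and "b' = succ_pt \<beta> b"
  obtain s\<^sub>1 s\<^sub>2 where "b \<in> alpha_pts \<beta>" "s\<^sub>1 \<in> alpha_pts \<beta>" "s\<^sub>1 < b" "s\<^sub>2 \<in> alpha_pts \<beta>" "b < s\<^sub>2"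
    using assms by (auto simp: turning_def)
  then have "consecutive \<beta> a b" "consecutive \<beta> b b'"
    and same_side: "sgn (fst (\<beta> a) - fst (\<beta> b)) = sgn (fst (\<beta> b') - fst (\<beta> b))"
    using consecutive_pred_pt[OF finite_alpha_pts] consecutive_succ_pt[OF finite_alpha_pts]
      turning_iff_sgn_fst[OF finite_alpha_pts inj] assms by (auto simp: a_def b'_def)
  then have alt: "arc_side \<beta> a b = - arc_side \<beta> b b'" using arc_side_alternates by blast
  have side: "\<And>u. u \<in> open_segment a b \<Longrightarrow> 0 < arc_side \<beta> a b * snd (\<beta> u)"
    using arc_side_pos[OF \<open>consecutive \<beta> a b\<close>] by blast
  have abs: "\<bar>arc_side \<beta> a b\<bar> = 1" by (rule abs_arc_side[OF \<open>consecutive \<beta> a b\<close>])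
  show "sgn (fst (\<beta> b') - fst (\<beta> b)) = - arc_side \<beta> b b'" if "is_bigon \<beta> b a"
    using is_bigon_side[OF that _ abs] side same_side alt by (simp add: open_segment_commute)
  show "sgn (fst (\<beta> b') - fst (\<beta> b)) = arc_side \<beta> b b'" if "is_bigon \<beta> a b"
    using is_bigon_side[OF that side abs] same_side alt sgn_minus[of "fst (\<beta> b) - fst (\<beta> a)"] by simp
qed

end

section \<open>Lifts of \<open>\<beta>\<close> in a standard diagram\<close>

lemma periodic_shift_int:
  fixes \<gamma> :: "real \<Rightarrow> 'a::real_vector"
  assumes "\<And>t. \<gamma> (t + 1) = \<gamma> t + P"
  shows "\<gamma> (t + of_int k) = \<gamma> t + of_int k *\<^sub>R P"
proof (induction k rule: int_induct[where k = 0])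
  case (step1 i)
  have "\<gamma> (t + of_int (i + 1)) = \<gamma> (t + of_int i + 1)" by (simp add: add.assoc)
  also have "\<dots> = \<gamma> (t + of_int i) + P" by (rule assms)
  finally show ?case using step1.IH by (simp add: algebra_simps)
next
  case (step2 i)
  have "\<gamma> (t + of_int i) = \<gamma> (t + of_int (i - 1) + 1)" by simp
  also have "\<dots> = \<gamma> (t + of_int (i - 1)) + P" by (rule assms)
  finally have "\<gamma> (t + of_int (i - 1)) = \<gamma> (t + of_int i) - P" by simp
  then show ?case using step2.IH by (simp add: scaleR_diff_left)
qed simp

lemma has_real_derivative_snd:
  fixes \<gamma> :: "real \<Rightarrow> 'a::real_normed_vector \<times> real"
  assumes "(\<gamma> has_vector_derivative V) (at t)"
  shows "((\<lambda>r. snd (\<gamma> r)) has_real_derivative snd V) (at t)"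
proof -
  have "((\<lambda>r. snd (\<gamma> r)) has_derivative (\<lambda>x. snd (x *\<^sub>R V))) (at t)"
    using has_derivative_snd assms unfolding has_vector_derivative_def by blast
  moreover have "(\<lambda>x. snd (x *\<^sub>R V)) = (*) (snd V)" by (auto simp: mult.commute)
  ultimately show ?thesis by (simp add: has_field_derivative_def)
qed

lemma bounded_alpha_pts_periodic:
  fixes \<gamma> :: "real \<Rightarrow> real \<times> real"
  assumes "continuous_on UNIV \<gamma>" and "\<And>t. \<gamma> (t + 1) = \<gamma> t + (p, q)" and "q \<ge> 1"
  shows "bounded (alpha_pts (\<lambda>r. \<gamma> r + v))"
proof -
  have "compact ((\<lambda>r. snd (\<gamma> r)) ` {0..1})"
    by (intro compact_continuous_image continuous_intros continuous_on_subset[OF assms(1)]) auto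
  then obtain M where M: "\<And>r. r \<in> {0..1} \<Longrightarrow> \<bar>snd (\<gamma> r)\<bar> \<le> M"
    using compact_imp_bounded bounded_real by (metis image_eqI)
  have "\<bar>t\<bar> \<le> M + \<bar>snd v\<bar> + 1" if "t \<in> alpha_pts (\<lambda>r. \<gamma> r + v)" for t
  proof -
    define k where "k = \<lfloor>t\<rfloor>"
    define r where "r = t - of_int k"
    have "r = frac t" by (simp add: r_def k_def frac_def)
    then have "r \<in> {0..1}" by (simp add: frac_lt_1 less_imp_le)
    have "\<gamma> t = \<gamma> r + of_int k *\<^sub>R (p, q)"
      using periodic_shift_int[of \<gamma>, OF assms(2)] unfolding r_def by (metis diff_add_cancel)
    then have "snd (\<gamma> r) + of_int k * q + snd v = 0"
      using that by (simp add: alpha_pts_def)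
    then have "\<bar>of_int k * q\<bar> \<le> M + \<bar>snd v\<bar>" using M[OF \<open>r \<in> {0..1}\<close>] by linarith
    moreover have "\<bar>(of_int k :: real)\<bar> \<le> \<bar>of_int k * q\<bar>"
      using assms(3) by (simp add: abs_mult mult_le_cancel_left1)
    moreover have "\<bar>t\<bar> \<le> \<bar>of_int k\<bar> + 1" using \<open>r \<in> {0..1}\<close> unfolding r_def by auto
    ultimately show ?thesis by linarith
  qed
  then show ?thesis unfolding bounded_iff by (auto simp: real_norm_def)
qed

lemma standard_diagram_transverse_curve:
  assumes "standard_diagram \<gamma> p q w z" and "int_vec v"
  shows "transverse_curve (\<lambda>r. \<gamma> r + v)"
proof unfold_locales
  have C1: "\<gamma> C1_differentiable_on UNIV"
    and periodic: "\<And>t. \<gamma> (t + 1) = \<gamma> t + (of_int p, of_int q)" and "q > 0"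
    and lift: "\<And>s t. int_vec (\<gamma> s - \<gamma> t) \<Longrightarrow> s - t \<in> \<int>"
    and transverse: "\<And>t. snd (\<gamma> t) \<in> \<int> \<Longrightarrow> snd (vector_derivative \<gamma> (at t)) \<noteq> 0"
    using assms(1) unfolding standard_diagram_def by auto
  have diff: "\<gamma> differentiable at t" for t using C1 by (simp add: C1_differentiable_on_eq)
  then have cont: "continuous_on UNIV \<gamma>"
    by (simp add: continuous_at_imp_continuous_on differentiable_imp_continuous_within)
  show "continuous_on UNIV (\<lambda>r. \<gamma> r + v)" by (intro continuous_intros cont)
  show "inj (\<lambda>r. \<gamma> r + v)"
  proof (rule injI)
    fix s t assume "\<gamma> s + v = \<gamma> t + v"
    then have "\<gamma> s = \<gamma> t" by simp
    then obtain k where k: "s = t + of_int k" using lift[of s t]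
      by (auto simp: int_vec_def elim!: Ints_cases) (metis add_diff_cancel_left' add_diff_eq)
    then have "of_int k * of_int q = (0::real)"
      using \<open>\<gamma> s = \<gamma> t\<close> periodic_shift_int[of \<gamma>, OF periodic, of t k] by (simp add: prod_eq_iff)
    then show "s = t" using k \<open>q > 0\<close> by simp
  qed
  have deriv: "((\<lambda>r. snd (\<gamma> r + v)) has_real_derivative snd (vector_derivative \<gamma> (at t))) (at t)" for t
    using has_real_derivative_snd[OF vector_derivative_works[THEN iffD1, OF diff[of t]]]
    by (auto intro!: derivative_eq_intros)
  show transverse_shift: "\<exists>D. D \<noteq> 0 \<and> ((\<lambda>r. snd (\<gamma> r + v)) has_real_derivative D) (at t)"
    if "t \<in> alpha_pts (\<lambda>r. \<gamma> r + v)" for t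
  proof -
    have "snd (\<gamma> t) = - snd v" using that by (simp add: alpha_pts_def)
    then have "snd (\<gamma> t) \<in> \<int>" using assms(2) by (simp add: int_vec_def)
    then show ?thesis using transverse deriv by blast
  qed
  show "finite (alpha_pts (\<lambda>r. \<gamma> r + v))"
    unfolding alpha_pts_def
  proof (rule finite_zeros_if_simple)
    show "continuous_on UNIV (\<lambda>r. snd (\<gamma> r + v))" using cont by (intro continuous_intros)
    show "bounded {r. snd (\<gamma> r + v) = 0}"
      using bounded_alpha_pts_periodic[OF cont periodic] \<open>q > 0\<close> by (simp add: alpha_pts_def)
  qed (use transverse_shift in \<open>auto simp: alpha_pts_def\<close>)
qed

theorem lemma3p7:
  fixes \<gamma> :: "real \<Rightarrow> real \<times> real" and p q :: int and w z v :: "real \<times> real"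
    and gr :: "real \<Rightarrow> int" and b c :: real
  assumes "standard_diagram \<gamma> p q w z"
    and "int_vec v"
    and "\<forall>s t. is_bigon (\<lambda>r. \<gamma> r + v) s t \<longrightarrow> gr s = gr t + 1"
    and "turning (\<lambda>r. \<gamma> r + v) b" and "turning (\<lambda>r. \<gamma> r + v) c" and "b < c"
    and "\<forall>t\<in>alpha_pts (\<lambda>r. \<gamma> r + v). b < t \<and> t < c \<longrightarrow> \<not> turning (\<lambda>r. \<gamma> r + v) t"
  shows "\<forall>t\<in>alpha_pts (\<lambda>r. \<gamma> r + v). b \<le> t \<and> t \<le> c \<longrightarrow>
    (let l = card {s \<in> alpha_pts (\<lambda>r. \<gamma> r + v). b \<le> s \<and> s < t} in
      (even l \<longrightarrow> gr t = gr b) \<and>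
      (odd l \<and> positive_turning (\<lambda>r. \<gamma> r + v) b \<longrightarrow> gr t = gr b + 1) \<and>
      (odd l \<and> negative_turning (\<lambda>r. \<gamma> r + v) b \<longrightarrow> gr t = gr b - 1))"
proof -
  define \<beta> where "\<beta> = (\<lambda>r. \<gamma> r + v)"
  interpret transverse_curve \<beta>
    unfolding \<beta>_def using assms(1,2) by (rule standard_diagram_transverse_curve)
  define \<delta> where "\<delta> = sgn (fst (\<beta> (succ_pt \<beta> b)) - fst (\<beta> b))"
  define \<epsilon> where "\<epsilon> = arc_side \<beta> b (succ_pt \<beta> b)"
  have "b \<in> alpha_pts \<beta>" "c \<in> alpha_pts \<beta>" using assms(4,5) by (auto simp: \<beta>_def turning_def)
  then have "\<bar>\<epsilon>\<bar> = 1"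
    using abs_arc_side consecutive_succ_pt(1)[OF finite_alpha_pts _ _ assms(6)] by (simp add: \<epsilon>_def)
  then have "\<epsilon> * \<epsilon> = 1" by (metis abs_mult_self_eq mult_1)
  have "positive_turning \<beta> b \<Longrightarrow> \<delta> = - \<epsilon>" "negative_turning \<beta> b \<Longrightarrow> \<delta> = \<epsilon>"
    using turning_sgn_fst_succ_pt unfolding positive_turning_def negative_turning_def \<delta>_def \<epsilon>_def
    by blast+
  then have sides: "positive_turning \<beta> b \<Longrightarrow> - \<delta> * \<epsilon> = 1" "negative_turning \<beta> b \<Longrightarrow> - \<delta> * \<epsilon> = - 1"
    using \<open>\<epsilon> * \<epsilon> = 1\<close> by auto
  show ?thesis
    unfolding Let_def \<beta>_def[symmetric] alpha_index_def[symmetric]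
  proof (intro ballI impI)
    fix t assume "t \<in> alpha_pts \<beta>" and "b \<le> t \<and> t \<le> c"
    then have "of_int (gr t - gr b) = (if even (alpha_index \<beta> b t) then 0 else - \<delta> * \<epsilon>)"
      using grading_alpha_index[of gr b t] assms(3,7) \<open>b \<in> alpha_pts \<beta>\<close>
      unfolding \<beta>_def \<delta>_def \<epsilon>_def by auto
    then show "(even (alpha_index \<beta> b t) \<longrightarrow> gr t = gr b) \<and>
      (odd (alpha_index \<beta> b t) \<and> positive_turning \<beta> b \<longrightarrow> gr t = gr b + 1) \<and>
      (odd (alpha_index \<beta> b t) \<and> negative_turning \<beta> b \<longrightarrow> gr t = gr b - 1)"
      using sides by auto
  qed
qed

end
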